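(* For every positive integer $n$, consider the transducer $\mathcal{T}_n$ defined below. (a) (Standard construction.) Let $\mathcal{T}'_n$ be the trimmed result of the specialized determinization of $\mathcal{T}_n$, and let $\mathcal{A}_L^{std}$ and $\mathcal{A}_R^{std}$ be the accessible subset-construction determinizations of the underlying automaton of $\mathcal{T}'_n$ and of the reversed underlying automaton of $\mathcal{T}'_n$, respectively. Then $\mathcal{A}_L^{std}$ and $\mathcal{A}_R^{std}$ together have at least $(n!+2)+(2^n+n)$ states. (b) (New construction.) Let $\mathcal{A}_L^{new}$ and $\mathcal{A}_R^{new}$ be the accessible subset-construction determinizations of the underlying automaton of $\mathcal{T}_n$ and of the reversed underlying automaton of $\mathcal{T}_n$, respectively. Then $\mathcal{A}_L^{new}$ and $\mathcal{A}_R^{new}$ together have exactly $3+(2^n+n)$ states.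
   Context: Let $\Sigma_n=\{a_1,\dots,a_n\}$ and let the output monoid be the free monoid $\{1\}^*$. $\mathcal{T}_n=\langle\Sigma_n^*\times\{1\}^*,Q,\{s\},\{f\},\Delta_n\rangle$ with $Q=\{s,q_1,\dots,q_n,f\}$, $Q_n=\{q_1,\dots,q_n\}$, and $\Delta_n=\Delta_{s,n}\cup\Delta_{Q_n}\cup\Delta_{f,n}$ where: $\Delta_{s,n}=\{\langle s,\langle a_j,1^{i-1}\rangle,q_i\rangle:1\le i,j\le n\}$; $\Delta_{Q_n}$ consists, for all $1\le i,j\le n$, of the transition $\langle q_i,\langle a_j,1^n\rangle,q_i\rangle$ if $i\notin\{1,j\}$, $\langle q_1,\langle a_j,1^{n+j-1}\rangle,q_j\rangle$ if $i=1$, and $\langle q_j,\langle a_j,1^{n-j+1}\rangle,q_1\rangle$ if $i=j\neq1$; $\Delta_{f,n}=\{\langle q_i,\langle a_j,1^{2n-i+1}\rangle,f\rangle:1\le j\le i\le n\}$. The underlying automaton of a transducer $\langle\Sigma^*\times\mathcal{M},Q,I,F,\Delta\rangle$ is the nondeterministic automaton over $\Sigma$ with states $Q$, initial states $I$, final states $F$ and transitions $\langle p,a,q\rangle$ for each $\langle p,\langle a,m\rangle,q\rangle\in\Delta$; its reversal swaps initial and final states and reverses all transitions. The accessible subset-construction determinization of an automaton with initial set $I$ has as states exactly the subsets reachable from $I$ via $\delta(P,a)=\{q:\exists p\in P,\ \langle p,a,q\rangle\}$. Specialized determinization: for a transducer with a single initial state $i$ over $\Sigma\times\Omega^*$ (here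 $\Omega=\{1\}$, with strict lexicographic order $\prec$ on $\Omega^*$, i.e. $1^k\prec1^l$ iff $k<l$), states are pairs $\langle p,N\rangle\in Q\times2^Q$, generated inductively starting from $\langle i,\emptyset\rangle$: for a generated $\langle p,N\rangle$ and $\langle p,\langle a,v\rangle,p'\rangle\in\Delta$ put $N'=\{q':\exists q\in N,\exists v'\,\langle q,\langle a,v'\rangle,q'\rangle\in\Delta\}\cup\{q:\exists v'\prec v,\ \langle p,\langle a,v'\rangle,q\rangle\in\Delta\}$; if $p'\notin N'$, the state $\langle p',N'\rangle$ and the transition $\langle\langle p,N\rangle,\langle a,v\rangle,\langle p',N'\rangle\rangle$ are added. Final states are $\{\langle f,N\rangle: f\in F,\ N\cap F=\emptyset\}$. Trimming keeps only states that are accessible (reachable from the initial state) and co-accessible (can reach a final state). *)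

theory Defs
  imports Main
begin

(* Transducers over letters 'a with outputs in {1}^*; the output word 1^k is
   represented by the natural number k, so the strict lexicographic order on
   {1}^* becomes < on nat. *)

type_synonym ('q,'a) trans = "('q \<times> 'a \<times> nat \<times> 'q) set"

definition underlying :: "('q,'a) trans \<Rightarrow> ('q \<times> 'a \<times> 'q) set" where
  "underlying \<Delta> = {(p, a, q). \<exists>v. (p, a, v, q) \<in> \<Delta>}"

definition reverse_aut :: "('q \<times> 'a \<times> 'q) set \<Rightarrow> ('q \<times> 'a \<times> 'q) set" where
  "reverse_aut T = {(q, a, p). (p, a, q) \<in> T}"

definition step_set :: "('q \<times> 'a \<times> 'q) set \<Rightarrow> 'q set \<Rightarrow> 'a \<Rightarrow> 'q set" where
  "step_set T P a = {q. \<exists>p\<in>P. (p, a, q) \<in> T}"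

inductive_set subset_det :: "'a set \<Rightarrow> ('q \<times> 'a \<times> 'q) set \<Rightarrow> 'q set \<Rightarrow> 'q set set"
  for \<Sigma> T I where
  init: "I \<in> subset_det \<Sigma> T I"
| step: "P \<in> subset_det \<Sigma> T I \<Longrightarrow> a \<in> \<Sigma> \<Longrightarrow> step_set T P a \<in> subset_det \<Sigma> T I"

definition sd_next :: "('q,'a) trans \<Rightarrow> 'q \<Rightarrow> 'q set \<Rightarrow> 'a \<Rightarrow> nat \<Rightarrow> 'q set" where
  "sd_next \<Delta> p N a v =
     {q'. \<exists>q\<in>N. \<exists>v'. (q, a, v', q') \<in> \<Delta>} \<union> {q. \<exists>v'. v' < v \<and> (p, a, v', q) \<in> \<Delta>}"

inductive_set sd_states :: "('q,'a) trans \<Rightarrow> 'q \<Rightarrow> ('q \<times> 'q set) set"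
  for \<Delta> i where
  init: "(i, {}) \<in> sd_states \<Delta> i"
| step: "(p, N) \<in> sd_states \<Delta> i \<Longrightarrow> (p, a, v, p') \<in> \<Delta> \<Longrightarrow>
         p' \<notin> sd_next \<Delta> p N a v \<Longrightarrow> (p', sd_next \<Delta> p N a v) \<in> sd_states \<Delta> i"

definition sd_trans :: "('q,'a) trans \<Rightarrow> 'q \<Rightarrow> ('q \<times> 'q set, 'a) trans" where
  "sd_trans \<Delta> i = {((p, N), a, v, (p', N')). (p, N) \<in> sd_states \<Delta> i \<and> (p, a, v, p') \<in> \<Delta> \<and>
       N' = sd_next \<Delta> p N a v \<and> p' \<notin> N'}"

definition sd_final :: "('q,'a) trans \<Rightarrow> 'q \<Rightarrow> 'q set \<Rightarrow> ('q \<times> 'q set) set" where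
  "sd_final \<Delta> i F = {(f, N). (f, N) \<in> sd_states \<Delta> i \<and> f \<in> F \<and> N \<inter> F = {}}"

definition trans_rel :: "('q,'a) trans \<Rightarrow> ('q \<times> 'q) set" where
  "trans_rel \<Delta> = {(p, q). \<exists>a v. (p, a, v, q) \<in> \<Delta>}"

definition trim_states :: "'q set \<Rightarrow> 'q set \<Rightarrow> ('q,'a) trans \<Rightarrow> 'q set" where
  "trim_states I F \<Delta> = {q. (\<exists>i\<in>I. (i, q) \<in> (trans_rel \<Delta>)\<^sup>*) \<and> (\<exists>f\<in>F. (q, f) \<in> (trans_rel \<Delta>)\<^sup>*)}"

definition trim_trans :: "'q set \<Rightarrow> 'q set \<Rightarrow> ('q,'a) trans \<Rightarrow> ('q,'a) trans" where
  "trim_trans I F \<Delta> = {(p, a, v, q). (p, a, v, q) \<in> \<Delta> \<and> p \<in> trim_states I F \<Delta> \<and> q \<in> trim_states I F \<Delta>}"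

(* The concrete transducer T_n: letter a_j is j, alphabet {1..n} *)
datatype st = S | Qst nat | Fst

definition Sigma_n :: "nat \<Rightarrow> nat set" where
  "Sigma_n n = {1..n}"

definition Delta_n :: "nat \<Rightarrow> (st, nat) trans" where
  "Delta_n n =
     {(S, j, i - 1, Qst i) | i j. 1 \<le> i \<and> i \<le> n \<and> 1 \<le> j \<and> j \<le> n}
   \<union> {(Qst i, j, n, Qst i) | i j. 1 \<le> i \<and> i \<le> n \<and> 1 \<le> j \<and> j \<le> n \<and> i \<noteq> 1 \<and> i \<noteq> j}
   \<union> {(Qst 1, j, n + j - 1, Qst j) | j. 1 \<le> j \<and> j \<le> n}
   \<union> {(Qst j, j, n - j + 1, Qst 1) | j. 1 \<le> j \<and> j \<le> n \<and> j \<noteq> 1}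
   \<union> {(Qst i, j, 2 * n - i + 1, Fst) | i j. 1 \<le> j \<and> j \<le> i \<and> i \<le> n}"

definition Tp_states :: "nat \<Rightarrow> (st \<times> st set) set" where
  "Tp_states n = trim_states {(S, {})} (sd_final (Delta_n n) S {Fst}) (sd_trans (Delta_n n) S)"

definition Tp_init :: "nat \<Rightarrow> (st \<times> st set) set" where
  "Tp_init n = {(S, {})} \<inter> Tp_states n"

definition Tp_final :: "nat \<Rightarrow> (st \<times> st set) set" where
  "Tp_final n = sd_final (Delta_n n) S {Fst} \<inter> Tp_states n"

definition Tp_trans :: "nat \<Rightarrow> (st \<times> st set, nat) trans" where
  "Tp_trans n = trim_trans {(S, {})} (sd_final (Delta_n n) S {Fst}) (sd_trans (Delta_n n) S)"

end

theory Submission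
  imports Defs "HOL-Combinatorics.Permutations"
begin

text \<open>
  Reading \<open>a\<^sub>j\<close> permutes the states \<open>q\<^sub>1, \<dots>, q\<^sub>n\<close> of \<open>T\<^sub>n\<close> by the transposition \<open>(1 j)\<close>,
  and \<open>q\<^sub>i\<close> moves to \<open>f\<close> on \<open>a\<^sub>j\<close> iff \<open>j \<le> i\<close>. So the subset construction of the underlying
  automaton only visits \<open>{s}\<close>, \<open>Q\<^sub>n\<close> and \<open>Q\<^sub>n \<union> {f}\<close>, while that of the reversed automaton
  visits \<open>{f}\<close>, the segments \<open>{q\<^sub>j, \<dots>, q\<^sub>n}\<close> and, since the transpositions \<open>(1 j)\<close>
  generate the symmetric group, every set \<open>{s} \<union> X\<close> with \<open>X \<subseteq> Q\<^sub>n\<close> nonempty.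

  In the specialized determinization every state is accessible and co-accessible, so trimming
  does nothing. There a state \<open>(q\<^sub>k, N)\<close> remembers the states reachable with a smaller output.
  After \<open>a\<^sub>1\<close> the left subset construction holds the states \<open>(q\<^sub>i, {q\<^sub>1, \<dots>, q\<^sub>i\<^sub>-\<^sub>1})\<close>,
  and a word acting by a permutation \<open>\<pi>\<close> turns them into \<open>(q\<^sub>\<pi>\<^sub>i, {q\<^sub>\<pi>\<^sub>l | l < i})\<close>, which
  determines \<open>\<pi>\<close>: this gives \<open>n!\<close> distinct subsets. On the right, projecting the subsets
  to first components yields every subset reached by the reversed automaton of \<open>T\<^sub>n\<close>.
\<close>

section \<open>Subset constructions and permutations\<close>

lemma step_set_mono: "P \<subseteq> P' \<Longrightarrow> step_set T P a \<subseteq> step_set T P' a"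
  unfolding step_set_def by auto

lemma image_step_set_subset:
  assumes "\<And>p a q. (p, a, q) \<in> T \<Longrightarrow> (f p, a, f q) \<in> T'"
  shows "f ` step_set T P a \<subseteq> step_set T' (f ` P) a"
  using assms unfolding step_set_def by blast

lemma mem_step_set_reverse_aut: "p \<in> step_set (reverse_aut T) Q a \<longleftrightarrow> (\<exists>q\<in>Q. (p, a, q) \<in> T)"
  unfolding step_set_def reverse_aut_def by auto

lemma subset_det_subset: "subset_det \<Sigma> T I \<subseteq> insert I (Pow {q. \<exists>p a. (p, a, q) \<in> T})"
proof
  fix P assume "P \<in> subset_det \<Sigma> T I"
  then show "P \<in> insert I (Pow {q. \<exists>p a. (p, a, q) \<in> T})"
    by (induction rule: subset_det.induct) (auto simp: step_set_def)
qed

lemma finite_subset_det: "finite {q. \<exists>p a. (p, a, q) \<in> T} \<Longrightarrow> finite (subset_det \<Sigma> T I)"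
  by (rule finite_subset[OF subset_det_subset]) auto

lemma trans_relI: "(p, a, q) \<in> underlying \<Delta> \<Longrightarrow> (p, q) \<in> trans_rel \<Delta>"
  unfolding underlying_def trans_rel_def by auto

abbreviation coaccessible :: "('q,'a) trans \<Rightarrow> 'q set \<Rightarrow> 'q \<Rightarrow> bool" where
  "coaccessible \<Delta> F q \<equiv> \<exists>f\<in>F. (q, f) \<in> (trans_rel \<Delta>)\<^sup>*"

lemma coaccessible_pred:
  "(p, a, q) \<in> underlying \<Delta> \<Longrightarrow> coaccessible \<Delta> F q \<Longrightarrow> coaccessible \<Delta> F p"
  by (meson converse_rtrancl_into_rtrancl trans_relI)

lemma permutes_star_transpositions_induct [consumes 3, case_names id step]:
  assumes "p permutes A" "finite A" and c: "c \<in> A" and "P id"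
    and step: "\<And>p j. p permutes A \<Longrightarrow> P p \<Longrightarrow> j \<in> A \<Longrightarrow> P (Transposition.transpose c j \<circ> p)"
  shows "P p"
  using assms(1,2)
proof (induction rule: permutes_induct)
  case id
  show ?case by fact
next
  case (swap a b p)
  consider "a = c" | "b = c" | "a \<noteq> c" "b \<noteq> c" by blast
  then show ?case
  proof cases
    case 1
    then show ?thesis using step swap by blast
  next
    case 2
    then have "Transposition.transpose a b = Transposition.transpose c a"
      by (simp add: transpose_commute)
    then show ?thesis using step[of p a] swap by metis
  next
    case 3
    have perm: "Transposition.transpose c j \<circ> q permutes A" if "q permutes A" "j \<in> A" for q j
      using permutes_compose[OF that(1) permutes_swap_id[OF c that(2)]] .
    have "Transposition.transpose a b = Transposition.transpose c a \<circ> Transposition.transpose c b \<circ> Transposition.transpose c a"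
      using transpose_comp_triple[of a b c] 3 swap(3) by (simp add: transpose_commute)
    moreover have "P (Transposition.transpose c a \<circ> (Transposition.transpose c b \<circ> (Transposition.transpose c a \<circ> p)))"
      using swap perm by (intro step) auto
    ultimately show ?thesis by (metis comp_assoc)
  qed
qed

lemma ex_permutes_image_eq:
  assumes "finite A" "X \<subseteq> A" "Y \<subseteq> A" "card X = card Y"
  obtains p where "p permutes A" "p ` X = Y"
proof -
  have fin: "finite X" "finite Y" "finite (A - X)" "finite (A - Y)"
    using assms finite_subset by auto
  obtain f where f: "bij_betw f X Y" using finite_same_card_bij fin assms(4) by blast
  have "card (A - X) = card (A - Y)" using assms by (simp add: card_Diff_subset fin)
  then obtain g where g: "bij_betw g (A - X) (A - Y)" using finite_same_card_bij fin by blast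
  define p where "p x = (if x \<in> X then f x else if x \<in> A then g x else x)" for x
  have "bij_betw p X Y" using f by (rule bij_betw_cong[THEN iffD1, rotated]) (simp add: p_def)
  moreover have "bij_betw p (A - X) (A - Y)" using g by (rule bij_betw_cong[THEN iffD1, rotated]) (simp add: p_def)
  ultimately have "bij_betw p (X \<union> (A - X)) (Y \<union> (A - Y))" by (rule bij_betw_combine) auto
  then have "bij_betw p A A" using assms by (simp add: Un_absorb1 Un_Diff_cancel)
  then have "p permutes A" by (rule bij_imp_permutes) (use assms(2) in \<open>auto simp: p_def\<close>)
  moreover have "p ` X = Y" using \<open>bij_betw p X Y\<close> by (simp add: bij_betw_def)
  ultimately show ?thesis by (rule that)
qed

lemma nonempty_subset_atLeastAtMost_induct [consumes 2, case_names segment step]: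
  fixes H :: "nat set \<Rightarrow> bool"
  assumes X: "X \<subseteq> {1..n}" "X \<noteq> {}"
    and segment: "\<And>j. j \<in> {1..n} \<Longrightarrow> H {j..n}"
    and step: "\<And>Y j. H Y \<Longrightarrow> Y \<subseteq> {1..n} \<Longrightarrow> Y \<noteq> {} \<Longrightarrow> j \<in> {1..n}
                 \<Longrightarrow> H (Transposition.transpose 1 j ` Y)"
  shows "H X"
proof -
  define c where "c = card X"
  have "finite X" using X(1) finite_subset by blast
  then have c: "1 \<le> c" "c \<le> n"
    using X card_mono[OF _ X(1)] by (auto simp: c_def Suc_le_eq card_gt_0_iff)
  then have "1 \<in> {1..n}" by simp
  \<comment> \<open>\<open>X\<close> is the image of a segment of the same size under a permutation of \<open>{1..n}\<close>\<close>
  define Y0 where "Y0 = {n + 1 - c..n}"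
  have Y0: "Y0 \<subseteq> {1..n}" "Y0 \<noteq> {}" "card Y0 = card X" "H Y0"
    using c by (auto simp: Y0_def c_def intro!: segment)
  obtain p where p: "p permutes {1..n}" "p ` Y0 = X"
    using ex_permutes_image_eq[OF _ Y0(1) X(1) Y0(3)] by blast
  have "H (q ` Y0)" if "q permutes {1..n}" for q
    using that finite_atLeastAtMost[of 1 n] \<open>1 \<in> {1..n}\<close>
  proof (induction rule: permutes_star_transpositions_induct)
    case id
    show ?case using Y0 by simp
  next
    case (step q j)
    have "q ` Y0 \<subseteq> {1..n}" using Y0(1) permutes_image[OF step(1)] by blast
    then have "H (Transposition.transpose 1 j ` q ` Y0)"
      using step Y0(2) by (intro assms(4)) auto
    then show ?case by (simp add: image_comp)
  qed
  then show ?thesis using p by metis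
qed

section \<open>The specialized determinization\<close>

definition trans_targets :: "('q,'a) trans \<Rightarrow> 'q set" where
  "trans_targets \<Delta> = {q. \<exists>p a v. (p, a, v, q) \<in> \<Delta>}"

lemma sd_states_fst_notin_snd: "(p, N) \<in> sd_states \<Delta> i \<Longrightarrow> p \<notin> N"
  by (induction rule: sd_states.induct) auto

lemma sd_states_initial_or_targets:
  "(p, N) \<in> sd_states \<Delta> i \<Longrightarrow> (p, N) = (i, {}) \<or> p \<in> trans_targets \<Delta> \<and> N \<subseteq> trans_targets \<Delta>"
  by (induction rule: sd_states.induct) (auto simp: trans_targets_def sd_next_def)

lemma sd_next_eq: "sd_next \<Delta> p N a v = step_set (underlying \<Delta>) N a \<union> {q. \<exists>v'<v. (p, a, v', q) \<in> \<Delta>}"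
  unfolding sd_next_def step_set_def underlying_def by auto

lemma mem_sd_trans:
  "((p, N), a, v, (p', N')) \<in> sd_trans \<Delta> i \<longleftrightarrow>
     (p, N) \<in> sd_states \<Delta> i \<and> (p, a, v, p') \<in> \<Delta> \<and> N' = sd_next \<Delta> p N a v \<and> p' \<notin> N'"
  unfolding sd_trans_def by auto

lemma sd_trans_states: "(x, a, v, y) \<in> sd_trans \<Delta> i \<Longrightarrow> x \<in> sd_states \<Delta> i \<and> y \<in> sd_states \<Delta> i"
  by (cases x; cases y) (auto simp: mem_sd_trans intro: sd_states.step)

lemma sd_trans_fst: "(x, a, v, y) \<in> sd_trans \<Delta> i \<Longrightarrow> (fst x, a, v, fst y) \<in> \<Delta>"
  by (cases x; cases y) (simp add: mem_sd_trans)

lemma underlying_sd_trans_states: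
  "(x, a, y) \<in> underlying (sd_trans \<Delta> i) \<Longrightarrow> x \<in> sd_states \<Delta> i \<and> y \<in> sd_states \<Delta> i"
  unfolding underlying_def by (auto dest: sd_trans_states)

lemma fst_step_set_reverse_sd_trans:
  "fst ` step_set (reverse_aut (underlying (sd_trans \<Delta> i))) P a
     \<subseteq> step_set (reverse_aut (underlying \<Delta>)) (fst ` P) a"
  by (rule image_step_set_subset) (auto simp: reverse_aut_def underlying_def dest: sd_trans_fst)

lemma sd_states_iff_accessible:
  "x \<in> sd_states \<Delta> i \<longleftrightarrow> ((i, {}), x) \<in> (trans_rel (sd_trans \<Delta> i))\<^sup>*"
proof
  have "((i, {}), (p, N)) \<in> (trans_rel (sd_trans \<Delta> i))\<^sup>*" if "(p, N) \<in> sd_states \<Delta> i" for p N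
    using that
  proof (induction rule: sd_states.induct)
    case (step p N a v p')
    then have "((p, N), (p', sd_next \<Delta> p N a v)) \<in> trans_rel (sd_trans \<Delta> i)"
      by (auto simp: trans_rel_def mem_sd_trans)
    with step.IH show ?case by (rule rtrancl_into_rtrancl)
  qed simp
  then show "x \<in> sd_states \<Delta> i \<Longrightarrow> ((i, {}), x) \<in> (trans_rel (sd_trans \<Delta> i))\<^sup>*"
    by (cases x) simp
next
  assume "((i, {}), x) \<in> (trans_rel (sd_trans \<Delta> i))\<^sup>*"
  then show "x \<in> sd_states \<Delta> i"
    by (induction rule: rtrancl_induct) (auto simp: trans_rel_def dest: sd_trans_states intro: sd_states.init)
qed

lemma sd_final_singleton: "sd_final \<Delta> i {f} = {x \<in> sd_states \<Delta> i. fst x = f}"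
  unfolding sd_final_def by (auto dest: sd_states_fst_notin_snd)

lemma
  assumes "\<And>x. x \<in> sd_states \<Delta> i \<Longrightarrow> coaccessible (sd_trans \<Delta> i) (sd_final \<Delta> i F) x"
  shows trim_states_sd_eq: "trim_states {(i, {})} (sd_final \<Delta> i F) (sd_trans \<Delta> i) = sd_states \<Delta> i"
    and trim_trans_sd_eq: "trim_trans {(i, {})} (sd_final \<Delta> i F) (sd_trans \<Delta> i) = sd_trans \<Delta> i"
proof -
  show states: "trim_states {(i, {})} (sd_final \<Delta> i F) (sd_trans \<Delta> i) = sd_states \<Delta> i"
    using assms by (auto simp: trim_states_def sd_states_iff_accessible)
  show "trim_trans {(i, {})} (sd_final \<Delta> i F) (sd_trans \<Delta> i) = sd_trans \<Delta> i"
    by (auto simp: trim_trans_def states dest: sd_trans_states)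
qed

section \<open>The transducer \<open>T\<^sub>n\<close> and its underlying automaton\<close>

\<comment> \<open>the letter \<open>a\<^sub>j\<close> acts on the indices of \<open>q\<^sub>1, \<dots>, q\<^sub>n\<close> as the transposition \<open>(1 j)\<close>\<close>
abbreviation tau :: "nat \<Rightarrow> nat \<Rightarrow> nat" where
  "tau j \<equiv> Transposition.transpose 1 j"

abbreviation Q_n :: "nat \<Rightarrow> st set" where
  "Q_n n \<equiv> Qst ` {1..n}"

abbreviation U_n :: "nat \<Rightarrow> (st \<times> nat \<times> st) set" where
  "U_n n \<equiv> underlying (Delta_n n)"

lemma inj_Qst: "inj Qst"
  by (rule injI) simp

lemma tau_in_atLeastAtMost: "j \<in> {1..n} \<Longrightarrow> k \<in> {1..n} \<Longrightarrow> tau j k \<in> {1..n}"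
  by (auto simp: Transposition.transpose_def)

definition q_output :: "nat \<Rightarrow> nat \<Rightarrow> nat \<Rightarrow> nat" where
  "q_output n k j = (if k = 1 then n + j - 1 else if k = j then n - j + 1 else n)"

lemma Delta_n_from_S: "(S, j, v, q) \<in> Delta_n n \<longleftrightarrow> j \<in> {1..n} \<and> (\<exists>i\<in>{1..n}. v = i - 1 \<and> q = Qst i)"
  unfolding Delta_n_def by auto

lemma Delta_n_from_Qst:
  "(Qst k, j, v, q) \<in> Delta_n n \<longleftrightarrow> k \<in> {1..n} \<and> j \<in> {1..n} \<and>
     (q = Qst (tau j k) \<and> v = q_output n k j \<or> j \<le> k \<and> q = Fst \<and> v = 2 * n - k + 1)"
  unfolding Delta_n_def q_output_def Transposition.transpose_def by auto

lemma Delta_n_from_Fst: "(Fst, j, v, q) \<notin> Delta_n n"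
  unfolding Delta_n_def by auto

lemma trans_targets_Delta_n: "trans_targets (Delta_n n) \<subseteq> insert Fst (Q_n n)"
  unfolding trans_targets_def Delta_n_def by (auto simp: Transposition.transpose_def)

lemma U_n_iff:
  "(p, j, q) \<in> U_n n \<longleftrightarrow> j \<in> {1..n} \<and>
     (p = S \<and> q \<in> Q_n n \<or> (\<exists>k\<in>{1..n}. p = Qst k \<and> (q = Qst (tau j k) \<or> j \<le> k \<and> q = Fst)))"
  unfolding underlying_def
  by (cases p) (auto simp: Delta_n_from_S Delta_n_from_Qst Delta_n_from_Fst)

lemma Qst_in_step_set_U_n:
  "Qst m \<in> step_set (U_n n) N j \<longleftrightarrow> j \<in> {1..n} \<and> m \<in> {1..n} \<and> (S \<in> N \<or> Qst (tau j m) \<in> N)"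
proof
  assume "Qst m \<in> step_set (U_n n) N j"
  then obtain p where "p \<in> N" "(p, j, Qst m) \<in> U_n n" by (auto simp: step_set_def)
  then consider "j \<in> {1..n}" "S \<in> N" "m \<in> {1..n}"
    | k where "j \<in> {1..n}" "k \<in> {1..n}" "Qst k \<in> N" "m = tau j k"
    unfolding U_n_iff by auto
  then show "j \<in> {1..n} \<and> m \<in> {1..n} \<and> (S \<in> N \<or> Qst (tau j m) \<in> N)"
    by cases (use tau_in_atLeastAtMost[of j n] in auto)
next
  assume m: "j \<in> {1..n} \<and> m \<in> {1..n} \<and> (S \<in> N \<or> Qst (tau j m) \<in> N)"
  then have "(S, j, Qst m) \<in> U_n n" "(Qst (tau j m), j, Qst m) \<in> U_n n"
    using tau_in_atLeastAtMost[of j n m] by (auto simp: U_n_iff)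
  then show "Qst m \<in> step_set (U_n n) N j"
    using m unfolding step_set_def by blast
qed

lemma Fst_in_step_set_U_n:
  "Fst \<in> step_set (U_n n) N j \<longleftrightarrow> j \<in> {1..n} \<and> (\<exists>k\<in>{1..n}. j \<le> k \<and> Qst k \<in> N)"
  unfolding step_set_def U_n_iff by auto

lemma S_notin_step_set_U_n: "S \<notin> step_set (U_n n) N j"
  unfolding step_set_def U_n_iff by auto

lemma S_in_step_set_reverse_U_n:
  "S \<in> step_set (reverse_aut (U_n n)) X j \<longleftrightarrow> j \<in> {1..n} \<and> X \<inter> Q_n n \<noteq> {}"
  unfolding mem_step_set_reverse_aut U_n_iff by auto

lemma Qst_in_step_set_reverse_U_n:
  "Qst m \<in> step_set (reverse_aut (U_n n)) X j \<longleftrightarrow>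
     j \<in> {1..n} \<and> m \<in> {1..n} \<and> (Qst (tau j m) \<in> X \<or> j \<le> m \<and> Fst \<in> X)"
  unfolding mem_step_set_reverse_aut U_n_iff by auto

lemma Fst_notin_step_set_reverse_U_n: "Fst \<notin> step_set (reverse_aut (U_n n)) X j"
  unfolding mem_step_set_reverse_aut U_n_iff by auto

lemma step_set_U_n:
  assumes j: "j \<in> {1..n}"
  shows step_set_U_n_S: "step_set (U_n n) {S} j = Q_n n"
    and step_set_U_n_Q_n: "step_set (U_n n) (Q_n n) j = insert Fst (Q_n n)"
    and step_set_U_n_insert_Fst: "step_set (U_n n) (insert Fst (Q_n n)) j = insert Fst (Q_n n)"
proof -
  have "q \<in> step_set (U_n n) {S} j \<longleftrightarrow> q \<in> Q_n n" for q
    using j by (cases q) (auto simp: Qst_in_step_set_U_n Fst_in_step_set_U_n S_notin_step_set_U_n)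
  then show "step_set (U_n n) {S} j = Q_n n" by blast
  have Q: "Qst m \<in> step_set (U_n n) (Q_n n) j \<longleftrightarrow> m \<in> {1..n}" for m
    using j tau_in_atLeastAtMost[of j n m] by (auto simp: Qst_in_step_set_U_n)
  have F: "Fst \<in> step_set (U_n n) (Q_n n) j"
    using j by (auto simp: Fst_in_step_set_U_n)
  have "q \<in> step_set (U_n n) (Q_n n) j \<longleftrightarrow> q \<in> insert Fst (Q_n n)" for q
    by (cases q) (use Q F S_notin_step_set_U_n in auto)
  then show Q_n: "step_set (U_n n) (Q_n n) j = insert Fst (Q_n n)" by blast
  have "step_set (U_n n) (insert Fst (Q_n n)) j = step_set (U_n n) (Q_n n) j"
    unfolding step_set_def by (auto simp: U_n_iff)
  with Q_n show "step_set (U_n n) (insert Fst (Q_n n)) j = insert Fst (Q_n n)" by simp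
qed

lemma subset_det_U_n:
  assumes "1 \<le> n"
  shows "subset_det (Sigma_n n) (U_n n) {S} = {{S}, Q_n n, insert Fst (Q_n n)}"
proof
  show "subset_det (Sigma_n n) (U_n n) {S} \<subseteq> {{S}, Q_n n, insert Fst (Q_n n)}"
  proof
    fix P assume "P \<in> subset_det (Sigma_n n) (U_n n) {S}"
    then show "P \<in> {{S}, Q_n n, insert Fst (Q_n n)}"
    proof (induction rule: subset_det.induct)
      case (step P a)
      then have "a \<in> {1..n}" by (simp add: Sigma_n_def)
      with step.IH show ?case using step_set_U_n by blast
    qed simp
  qed
  have one: "1 \<in> Sigma_n n" "1 \<in> {1..n}" using assms by (simp_all add: Sigma_n_def)
  have "Q_n n \<in> subset_det (Sigma_n n) (U_n n) {S}"
    using subset_det.step[OF subset_det.init one(1)] step_set_U_n_S[OF one(2)] by metis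
  moreover from subset_det.step[OF this one(1)]
  have "insert Fst (Q_n n) \<in> subset_det (Sigma_n n) (U_n n) {S}"
    using step_set_U_n_Q_n[OF one(2)] by metis
  ultimately show "{{S}, Q_n n, insert Fst (Q_n n)} \<subseteq> subset_det (Sigma_n n) (U_n n) {S}"
    by (auto intro: subset_det.init)
qed

lemma card_subset_det_U_n: "1 \<le> n \<Longrightarrow> card (subset_det (Sigma_n n) (U_n n) {S}) = 3"
proof -
  assume "1 \<le> n"
  then have "Qst 1 \<in> Q_n n" by simp
  then have "{S} \<noteq> Q_n n" "{S} \<noteq> insert Fst (Q_n n)" "Q_n n \<noteq> insert Fst (Q_n n)" by auto
  then show ?thesis using subset_det_U_n[OF \<open>1 \<le> n\<close>] by simp
qed

lemma step_set_reverse_U_n_Fst: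
  assumes "j \<in> {1..n}"
  shows "step_set (reverse_aut (U_n n)) {Fst} j = Qst ` {j..n}"
proof -
  have "q \<in> step_set (reverse_aut (U_n n)) {Fst} j \<longleftrightarrow> q \<in> Qst ` {j..n}" for q
    using assms
    by (cases q) (use S_in_step_set_reverse_U_n Qst_in_step_set_reverse_U_n Fst_notin_step_set_reverse_U_n in auto)
  then show ?thesis by blast
qed

lemma step_set_reverse_U_n_Qst:
  assumes j: "j \<in> {1..n}" and Y: "Y \<subseteq> {1..n}" "Y \<noteq> {}"
  shows "step_set (reverse_aut (U_n n)) (Qst ` Y) j = insert S (Qst ` tau j ` Y)"
proof -
  have "Qst m \<in> step_set (reverse_aut (U_n n)) (Qst ` Y) j \<longleftrightarrow> m \<in> tau j ` Y" for m
  proof -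
    have "m \<in> tau j ` Y \<Longrightarrow> m \<in> {1..n}"
      using Y(1) j tau_in_atLeastAtMost[of j n] by auto
    then show ?thesis
      using j by (auto simp: Qst_in_step_set_reverse_U_n in_transpose_image_iff)
  qed
  moreover have "S \<in> step_set (reverse_aut (U_n n)) (Qst ` Y) j"
    using j Y by (auto simp: S_in_step_set_reverse_U_n)
  moreover note Fst_notin_step_set_reverse_U_n
  ultimately have "q \<in> step_set (reverse_aut (U_n n)) (Qst ` Y) j \<longleftrightarrow> q \<in> insert S (Qst ` tau j ` Y)" for q
    by (cases q) auto
  then show ?thesis by blast
qed

lemma step_set_reverse_U_n_insert_S:
  "step_set (reverse_aut (U_n n)) (insert S X) j = step_set (reverse_aut (U_n n)) X j"
  unfolding step_set_def reverse_aut_def by (auto simp: U_n_iff)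

definition reverse_subsets :: "nat \<Rightarrow> st set set" where
  "reverse_subsets n = insert {Fst} ((\<lambda>j. Qst ` {j..n}) ` {1..n}
     \<union> (\<lambda>X. insert S (Qst ` X)) ` {X. X \<subseteq> {1..n} \<and> X \<noteq> {}})"

lemma reverse_subsetsI:
  "{Fst} \<in> reverse_subsets n"
  "j \<in> {1..n} \<Longrightarrow> Qst ` {j..n} \<in> reverse_subsets n"
  "X \<subseteq> {1..n} \<Longrightarrow> X \<noteq> {} \<Longrightarrow> insert S (Qst ` X) \<in> reverse_subsets n"
  unfolding reverse_subsets_def by blast+

lemma reverse_subsetsE:
  assumes "P \<in> reverse_subsets n"
  obtains "P = {Fst}" | j where "j \<in> {1..n}" "P = Qst ` {j..n}"
    | X where "X \<subseteq> {1..n}" "X \<noteq> {}" "P = insert S (Qst ` X)"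
  using assms unfolding reverse_subsets_def by blast

lemma step_set_reverse_U_n_reverse_subsets:
  assumes P: "P \<in> reverse_subsets n" and a: "a \<in> {1..n}"
  shows "step_set (reverse_aut (U_n n)) P a \<in> reverse_subsets n"
proof -
  have step_Qst: "step_set (reverse_aut (U_n n)) (Qst ` X) a \<in> reverse_subsets n"
    if "X \<subseteq> {1..n}" "X \<noteq> {}" for X
  proof -
    have "tau a ` X \<subseteq> {1..n}" "tau a ` X \<noteq> {}"
      using that a tau_in_atLeastAtMost[of a n] by auto
    then show ?thesis using step_set_reverse_U_n_Qst[OF a that] reverse_subsetsI(3) by simp
  qed
  from P show ?thesis
  proof (cases rule: reverse_subsetsE)
    case 1
    then show ?thesis using step_set_reverse_U_n_Fst[OF a] reverse_subsetsI(2)[OF a] by simp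
  next
    case (2 j)
    then show ?thesis using step_Qst[of "{j..n}"] by simp
  next
    case (3 X)
    then show ?thesis using step_Qst[of X] step_set_reverse_U_n_insert_S by simp
  qed
qed

lemma segment_in_subset_det_reverse_U_n:
  assumes "j \<in> {1..n}"
  shows "Qst ` {j..n} \<in> subset_det (Sigma_n n) (reverse_aut (U_n n)) {Fst}"
proof -
  have "j \<in> Sigma_n n" using assms by (simp add: Sigma_n_def)
  from subset_det.step[OF subset_det.init this, of "reverse_aut (U_n n)" "{Fst}"] show ?thesis
    using step_set_reverse_U_n_Fst[OF assms] by simp
qed

lemma insert_S_in_subset_det_reverse_U_n:
  assumes "X \<subseteq> {1..n}" "X \<noteq> {}"
  shows "insert S (Qst ` X) \<in> subset_det (Sigma_n n) (reverse_aut (U_n n)) {Fst}"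
  using assms
proof (induction rule: nonempty_subset_atLeastAtMost_induct)
  case (segment j)
  then have one: "1 \<in> Sigma_n n" "1 \<in> {1..n}" by (auto simp: Sigma_n_def)
  from subset_det.step[OF segment_in_subset_det_reverse_U_n[OF segment] one(1)]
  show ?case using step_set_reverse_U_n_Qst[OF one(2), of "{j..n}"] segment by simp
next
  case (step Y j)
  then have "j \<in> Sigma_n n" by (simp add: Sigma_n_def)
  from subset_det.step[OF step(1) this]
  show ?case using step_set_reverse_U_n_insert_S step_set_reverse_U_n_Qst[OF step(4,2,3)] by simp
qed

lemma subset_det_reverse_U_n: "subset_det (Sigma_n n) (reverse_aut (U_n n)) {Fst} = reverse_subsets n"
proof
  show "subset_det (Sigma_n n) (reverse_aut (U_n n)) {Fst} \<subseteq> reverse_subsets n"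
  proof
    fix P assume "P \<in> subset_det (Sigma_n n) (reverse_aut (U_n n)) {Fst}"
    then show "P \<in> reverse_subsets n"
      by (induction rule: subset_det.induct)
        (simp_all add: reverse_subsetsI(1) step_set_reverse_U_n_reverse_subsets Sigma_n_def)
  qed
  show "reverse_subsets n \<subseteq> subset_det (Sigma_n n) (reverse_aut (U_n n)) {Fst}"
  proof
    fix P assume "P \<in> reverse_subsets n"
    then show "P \<in> subset_det (Sigma_n n) (reverse_aut (U_n n)) {Fst}"
      by (cases rule: reverse_subsetsE)
        (simp_all add: subset_det.init segment_in_subset_det_reverse_U_n insert_S_in_subset_det_reverse_U_n)
  qed
qed

lemma card_reverse_subsets:
  assumes "1 \<le> n"
  shows "card (reverse_subsets n) = 2 ^ n + n"
proof -
  let ?A = "(\<lambda>j. Qst ` {j..n}) ` {1..n}"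
  let ?B = "(\<lambda>X. insert S (Qst ` X)) ` (Pow {1..n} - {{}})"
  have "inj_on (\<lambda>j. Qst ` {j..n}) {1..n}"
  proof (rule inj_onI)
    fix x y assume "x \<in> {1..n}" "y \<in> {1..n}" "Qst ` {x..n} = Qst ` {y..n}"
    then have "{x..n} = {y..n}" "x \<le> n" "y \<le> n" using inj_image_eq_iff[OF inj_Qst] by auto
    then show "x = y" by (metis atLeastAtMost_iff le_antisym order_refl)
  qed
  then have card_A: "card ?A = n" by (simp add: card_image)
  have "inj_on (\<lambda>X. insert S (Qst ` X)) (Pow {1..n} - {{}})"
  proof (rule inj_onI)
    fix X Y assume "insert S (Qst ` X) = insert S (Qst ` Y)"
    then have "Qst ` X = Qst ` Y" by auto
    then show "X = Y" using inj_image_eq_iff[OF inj_Qst] by blast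
  qed
  then have card_B: "card ?B = 2 ^ n - 1" by (simp add: card_image card_Pow)
  have "reverse_subsets n = insert {Fst} (?A \<union> ?B)"
    unfolding reverse_subsets_def by (rule arg_cong[where f = "insert {Fst}"]) auto
  moreover have "{Fst} \<notin> ?A \<union> ?B" using assms by auto
  moreover have "?A \<inter> ?B = {}" by auto
  ultimately have "card (reverse_subsets n) = Suc (n + (2 ^ n - 1))"
    using card_A card_B by (simp add: card_Un_disjoint)
  then show ?thesis using one_le_power[of 2 n] by simp
qed

section \<open>The specialized determinization of \<open>T\<^sub>n\<close>\<close>

abbreviation SD_n :: "nat \<Rightarrow> (st \<times> st set, nat) trans" where
  "SD_n n \<equiv> sd_trans (Delta_n n) S"

abbreviation SD_states :: "nat \<Rightarrow> (st \<times> st set) set" where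
  "SD_states n \<equiv> sd_states (Delta_n n) S"

lemma SD_states_Delta_nD:
  assumes "(p, N) \<in> SD_states n"
  shows "p \<notin> N" "N \<subseteq> insert Fst (Q_n n)" "p \<in> insert S (insert Fst (Q_n n))" "p = S \<Longrightarrow> N = {}"
proof -
  have "S \<notin> trans_targets (Delta_n n)" using trans_targets_Delta_n by blast
  then show "p \<notin> N" "N \<subseteq> insert Fst (Q_n n)" "p \<in> insert S (insert Fst (Q_n n))" "p = S \<Longrightarrow> N = {}"
    using sd_states_fst_notin_snd[OF assms] sd_states_initial_or_targets[OF assms] trans_targets_Delta_n
    by auto
qed

lemma finite_SD_states: "finite (SD_states n)"
proof (rule finite_subset)
  show "SD_states n \<subseteq> insert S (insert Fst (Q_n n)) \<times> Pow (insert Fst (Q_n n))"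
    using SD_states_Delta_nD by fastforce
qed simp

lemma q_output_less: "k \<in> {1..n} \<Longrightarrow> j \<in> {1..n} \<Longrightarrow> q_output n k j < 2 * n - k + 1"
  by (auto simp: q_output_def)

lemma sd_next_Delta_n_Qst:
  assumes k: "k \<in> {1..n}" and j: "j \<in> {1..n}"
  shows "sd_next (Delta_n n) (Qst k) N j (q_output n k j) = step_set (U_n n) N j"
    and "sd_next (Delta_n n) (Qst k) N j (2 * n - k + 1) = insert (Qst (tau j k)) (step_set (U_n n) N j)"
  using q_output_less[OF k j] k j by (auto simp: sd_next_eq Delta_n_from_Qst)

lemma sd_next_Delta_n_S: "i \<in> {1..n} \<Longrightarrow> j \<in> {1..n} \<Longrightarrow> sd_next (Delta_n n) S {} j (i - 1) = Qst ` {1..<i}"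
  by (auto simp: sd_next_def Delta_n_from_S)

lemma underlying_SD_n_from_S:
  "((S, N), j, y) \<in> underlying (SD_n n) \<longleftrightarrow>
     N = {} \<and> j \<in> {1..n} \<and> (\<exists>i\<in>{1..n}. y = (Qst i, Qst ` {1..<i}))"
proof -
  have "((S, N), j, y) \<in> underlying (SD_n n) \<Longrightarrow> N = {}"
    using SD_states_Delta_nD(4) by (blast dest: underlying_sd_trans_states)
  then show ?thesis
    using sd_next_Delta_n_S[of _ n j]
    by (cases y) (auto simp: underlying_def mem_sd_trans Delta_n_from_S intro: sd_states.init)
qed

lemma underlying_SD_n_from_Qst:
  assumes "(Qst k, N) \<in> SD_states n"
  shows "((Qst k, N), j, y) \<in> underlying (SD_n n) \<longleftrightarrow> j \<in> {1..n} \<and>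
     (y = (Qst (tau j k), step_set (U_n n) N j)
      \<or> j \<le> k \<and> Fst \<notin> step_set (U_n n) N j \<and> y = (Fst, insert (Qst (tau j k)) (step_set (U_n n) N j)))"
proof -
  have k: "k \<in> {1..n}" and N: "Qst k \<notin> N" "S \<notin> N"
    using SD_states_Delta_nD[OF assms] by auto
  have "Qst (tau j k) \<notin> step_set (U_n n) N j"
    using N by (simp add: Qst_in_step_set_U_n)
  then show ?thesis
    using assms k sd_next_Delta_n_Qst[OF k, of j N]
    by (cases y) (auto simp: underlying_def mem_sd_trans Delta_n_from_Qst)
qed

lemma underlying_SD_n_from_Fst: "((Fst, N), j, y) \<notin> underlying (SD_n n)"
  by (cases y) (auto simp: underlying_def mem_sd_trans Delta_n_from_Fst)

lemma SD_states_Qst_coaccessible: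
  assumes n: "1 \<le> n" and N: "(Qst k, N) \<in> SD_states n"
  shows "coaccessible (SD_n n) (sd_final (Delta_n n) S {Fst}) (Qst k, N)"
proof -
  \<comment> \<open>\<open>a\<^sub>k\<close> leads from \<open>q\<^sub>k\<close> to \<open>q\<^sub>1\<close>, then \<open>a\<^sub>n\<close> to \<open>q\<^sub>n\<close>, then \<open>a\<^sub>n\<close> into \<open>f\<close>\<close>
  let ?coacc = "coaccessible (SD_n n) (sd_final (Delta_n n) S {Fst})"
  have coacc_Qst_n: "?coacc (Qst n, N)" if N: "(Qst n, N) \<in> SD_states n" for N
  proof -
    have "Fst \<notin> step_set (U_n n) N n"
      using SD_states_Delta_nD(1)[OF N] by (auto simp: Fst_in_step_set_U_n)
    with N n have t: "((Qst n, N), n, (Fst, insert (Qst (tau n n)) (step_set (U_n n) N n))) \<in> underlying (SD_n n)"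
      by (simp add: underlying_SD_n_from_Qst)
    then have "?coacc (Fst, insert (Qst (tau n n)) (step_set (U_n n) N n))"
      using underlying_sd_trans_states[OF t] by (auto simp: sd_final_singleton)
    with t show ?thesis by (rule coaccessible_pred)
  qed
  have coacc_Qst_1: "?coacc (Qst 1, N)" if N: "(Qst 1, N) \<in> SD_states n" for N
  proof -
    have t: "((Qst 1, N), n, (Qst n, step_set (U_n n) N n)) \<in> underlying (SD_n n)"
      using N n by (simp add: underlying_SD_n_from_Qst)
    show ?thesis
      by (rule coaccessible_pred[OF t coacc_Qst_n]) (use underlying_sd_trans_states[OF t] in blast)
  qed
  show ?thesis
  proof (cases "k = 1")
    case True
    then show ?thesis using coacc_Qst_1 N by simp
  next
    case False
    have "k \<in> {1..n}" using SD_states_Delta_nD(3)[OF N] by auto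
    then have t: "((Qst k, N), k, (Qst 1, step_set (U_n n) N k)) \<in> underlying (SD_n n)"
      using N by (simp add: underlying_SD_n_from_Qst)
    show ?thesis
      by (rule coaccessible_pred[OF t coacc_Qst_1]) (use underlying_sd_trans_states[OF t] in blast)
  qed
qed

lemma SD_states_coaccessible:
  assumes n: "1 \<le> n" and x: "x \<in> SD_states n"
  shows "coaccessible (SD_n n) (sd_final (Delta_n n) S {Fst}) x"
proof -
  obtain p N where pN: "x = (p, N)" by fastforce
  have t: "((S, {}), 1, (Qst 1, {})) \<in> underlying (SD_n n)"
    using n by (simp add: underlying_SD_n_from_S)
  then have "coaccessible (SD_n n) (sd_final (Delta_n n) S {Fst}) (S, {})"
    using underlying_sd_trans_states[OF t] SD_states_Qst_coaccessible[OF n]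
    by (blast intro: coaccessible_pred)
  then show ?thesis
    using x pN SD_states_Delta_nD[of p N n] SD_states_Qst_coaccessible[OF n]
    by (cases p) (auto simp: sd_final_singleton)
qed

lemma Tp_states_eq: "1 \<le> n \<Longrightarrow> Tp_states n = SD_states n"
  unfolding Tp_states_def by (rule trim_states_sd_eq[OF SD_states_coaccessible])

lemma Tp_trans_eq: "1 \<le> n \<Longrightarrow> Tp_trans n = SD_n n"
  unfolding Tp_trans_def by (rule trim_trans_sd_eq[OF SD_states_coaccessible])

lemma Tp_init_eq: "1 \<le> n \<Longrightarrow> Tp_init n = {(S, {})}"
  unfolding Tp_init_def by (auto simp: Tp_states_eq intro: sd_states.init)

lemma Tp_final_eq: "1 \<le> n \<Longrightarrow> Tp_final n = sd_final (Delta_n n) S {Fst}"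
  unfolding Tp_final_def by (auto simp: Tp_states_eq sd_final_def)

section \<open>The left subset construction\<close>

abbreviation left_det_SD :: "nat \<Rightarrow> (st \<times> st set) set set" where
  "left_det_SD n \<equiv> subset_det (Sigma_n n) (underlying (SD_n n)) {(S, {})}"

lemma targets_underlying_SD_n: "{q. \<exists>p a. (p, a, q) \<in> underlying (SD_n n)} \<subseteq> SD_states n"
  by (auto dest: underlying_sd_trans_states)

lemma left_det_SD_subset_SD_states:
  assumes "P \<in> left_det_SD n"
  shows "P \<subseteq> SD_states n"
proof -
  have "P = {(S, {})} \<or> P \<subseteq> {q. \<exists>p a. (p, a, q) \<in> underlying (SD_n n)}"
    using subset_det_subset assms by blast
  moreover have "(S, {}) \<in> SD_states n" by (rule sd_states.init)
  ultimately show ?thesis using targets_underlying_SD_n by blast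
qed

lemma finite_left_det_SD: "finite (left_det_SD n)"
  by (rule finite_subset_det, rule finite_subset[OF targets_underlying_SD_n finite_SD_states])

lemma S_notin_fst_step_set_SD_n: "S \<notin> fst ` step_set (underlying (SD_n n)) P j"
proof
  assume "S \<in> fst ` step_set (underlying (SD_n n)) P j"
  then obtain x v y where "(x, j, v, y) \<in> SD_n n" "fst y = S"
    by (auto simp: step_set_def underlying_def)
  then have "S \<in> trans_targets (Delta_n n)"
    unfolding trans_targets_def using sd_trans_fst by fastforce
  then show False using trans_targets_Delta_n by blast
qed

definition profile :: "(st \<times> st set) set \<Rightarrow> (nat \<times> nat set) set" where
  "profile P = {(k, Qst -` N) | k N. (Qst k, N) \<in> P}"

\<comment> \<open>the profile of the subset reached by \<open>a\<^sub>1\<close> followed by a word acting as \<open>\<pi>\<close>\<close>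
definition perm_profile :: "nat \<Rightarrow> (nat \<Rightarrow> nat) \<Rightarrow> (nat \<times> nat set) set" where
  "perm_profile n \<pi> = (\<lambda>i. (\<pi> i, \<pi> ` {1..<i})) ` {1..n}"

lemma perm_profile_comp:
  "perm_profile n (\<sigma> \<circ> \<pi>) = (\<lambda>(k, Y). (\<sigma> k, \<sigma> ` Y)) ` perm_profile n \<pi>"
  unfolding perm_profile_def by (simp add: image_image image_comp)

lemma inj_on_perm_profile: "inj_on (perm_profile n) {\<pi>. \<pi> permutes {1..n}}"
proof (rule inj_onI)
  fix \<pi> \<sigma>
  assume \<pi>: "\<pi> \<in> {\<pi>. \<pi> permutes {1..n}}" and \<sigma>: "\<sigma> \<in> {\<pi>. \<pi> permutes {1..n}}"
    and eq: "perm_profile n \<pi> = perm_profile n \<sigma>"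
  show "\<pi> = \<sigma>"
  proof
    fix i
    show "\<pi> i = \<sigma> i"
    proof (cases "i \<in> {1..n}")
      case False
      then show ?thesis
        using permutes_not_in[of \<pi> "{1..n}" i] permutes_not_in[of \<sigma> "{1..n}" i] \<pi> \<sigma> by simp
    next
      case True
      \<comment> \<open>the entry recording \<open>\<pi> i\<close> also records \<open>i - 1\<close> values, which pins down \<open>i\<close>\<close>
      then have "(\<pi> i, \<pi> ` {1..<i}) \<in> perm_profile n \<sigma>" using eq unfolding perm_profile_def by blast
      then obtain i' where i': "i' \<in> {1..n}" "\<pi> i = \<sigma> i'" "\<pi> ` {1..<i} = \<sigma> ` {1..<i'}"
        unfolding perm_profile_def by blast
      have "inj \<pi>" "inj \<sigma>" using \<pi> \<sigma> by (simp_all add: permutes_inj)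
      then have "card (\<pi> ` {1..<i}) = card {1..<i}" "card (\<sigma> ` {1..<i'}) = card {1..<i'}"
        by (simp_all add: card_image inj_on_subset)
      then have "i = i'" using i' True by auto
      then show ?thesis using i'(2) by simp
    qed
  qed
qed

lemma Qst_vimage_step_set_U_n:
  assumes N: "N \<subseteq> insert Fst (Q_n n)" and j: "j \<in> {1..n}"
  shows "Qst -` step_set (U_n n) N j = tau j ` (Qst -` N)"
proof -
  have "S \<notin> N" using N by blast
  moreover have "m \<in> {1..n}" if "Qst (tau j m) \<in> N" for m
    using that N j tau_in_atLeastAtMost[of j n "tau j m"] by auto
  ultimately show ?thesis
    using j by (auto simp: Qst_in_step_set_U_n in_transpose_image_iff)
qed

lemma Qst_in_step_set_SD_n:
  assumes P: "P \<subseteq> SD_states n" "S \<notin> fst ` P" and j: "j \<in> {1..n}"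
  shows "(Qst m, N') \<in> step_set (underlying (SD_n n)) P j \<longleftrightarrow>
    (\<exists>N. (Qst (tau j m), N) \<in> P \<and> N' = step_set (U_n n) N j)"
proof
  assume "(Qst m, N') \<in> step_set (underlying (SD_n n)) P j"
  then obtain p N where x: "(p, N) \<in> P" "((p, N), j, (Qst m, N')) \<in> underlying (SD_n n)"
    by (auto simp: step_set_def)
  then obtain k where "p = Qst k"
    using P(2) underlying_SD_n_from_Fst by (cases p) force+
  moreover have "(Qst k, N) \<in> SD_states n" using P(1) x(1) \<open>p = Qst k\<close> by auto
  ultimately show "\<exists>N. (Qst (tau j m), N) \<in> P \<and> N' = step_set (U_n n) N j"
    using x by (auto simp: underlying_SD_n_from_Qst)
next
  assume "\<exists>N. (Qst (tau j m), N) \<in> P \<and> N' = step_set (U_n n) N j"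
  then obtain N where N: "(Qst (tau j m), N) \<in> P" "N' = step_set (U_n n) N j" by blast
  moreover have "(Qst (tau j m), N) \<in> SD_states n" using P(1) N(1) by auto
  ultimately have "((Qst (tau j m), N), j, (Qst m, N')) \<in> underlying (SD_n n)"
    using j by (simp add: underlying_SD_n_from_Qst)
  then show "(Qst m, N') \<in> step_set (underlying (SD_n n)) P j"
    using N(1) by (auto simp: step_set_def)
qed

lemma profile_step_set_SD_n:
  assumes P: "P \<subseteq> SD_states n" "S \<notin> fst ` P" and j: "j \<in> {1..n}"
  shows "profile (step_set (underlying (SD_n n)) P j) = (\<lambda>(k, Y). (tau j k, tau j ` Y)) ` profile P"
proof (rule set_eqI)
  fix z
  have vimage: "Qst -` step_set (U_n n) N j = tau j ` (Qst -` N)" if "(p, N) \<in> P" for p N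
  proof -
    have "(p, N) \<in> SD_states n" using P(1) that by blast
    from SD_states_Delta_nD(2)[OF this] show ?thesis by (rule Qst_vimage_step_set_U_n[OF _ j])
  qed
  have "z \<in> profile (step_set (underlying (SD_n n)) P j) \<longleftrightarrow>
      (\<exists>m N. (Qst (tau j m), N) \<in> P \<and> z = (m, Qst -` step_set (U_n n) N j))"
    unfolding profile_def mem_Collect_eq Qst_in_step_set_SD_n[OF P j] by blast
  also have "\<dots> \<longleftrightarrow> (\<exists>m N. (Qst (tau j m), N) \<in> P \<and> z = (m, tau j ` (Qst -` N)))"
    by (intro ex_cong1 conj_cong refl) (simp add: vimage)
  also have "\<dots> \<longleftrightarrow> (\<exists>k N. (Qst k, N) \<in> P \<and> z = (tau j k, tau j ` (Qst -` N)))"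
    by (metis transpose_involutory)
  also have "\<dots> \<longleftrightarrow> z \<in> (\<lambda>(k, Y). (tau j k, tau j ` Y)) ` profile P"
    unfolding profile_def by fastforce
  finally show "z \<in> profile (step_set (underlying (SD_n n)) P j) \<longleftrightarrow> \<dots>" .
qed

lemma step_set_SD_n_initial:
  assumes "j \<in> {1..n}"
  shows "step_set (underlying (SD_n n)) {(S, {})} j = (\<lambda>i. (Qst i, Qst ` {1..<i})) ` {1..n}"
proof (rule set_eqI)
  fix y
  have "y \<in> step_set (underlying (SD_n n)) {(S, {})} j \<longleftrightarrow> ((S, {}), j, y) \<in> underlying (SD_n n)"
    by (simp add: step_set_def)
  also have "\<dots> \<longleftrightarrow> y \<in> (\<lambda>i. (Qst i, Qst ` {1..<i})) ` {1..n}"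
    unfolding underlying_SD_n_from_S using assms by blast
  finally show "y \<in> step_set (underlying (SD_n n)) {(S, {})} j \<longleftrightarrow> \<dots>" .
qed

lemma profile_image: "profile ((\<lambda>i. (Qst (f i), Qst ` g i)) ` A) = (\<lambda>i. (f i, g i)) ` A"
proof (rule set_eqI)
  fix z
  have "z \<in> profile ((\<lambda>i. (Qst (f i), Qst ` g i)) ` A) \<longleftrightarrow> (\<exists>i\<in>A. z = (f i, Qst -` Qst ` g i))"
    unfolding profile_def by blast
  then show "z \<in> profile ((\<lambda>i. (Qst (f i), Qst ` g i)) ` A) \<longleftrightarrow> z \<in> (\<lambda>i. (f i, g i)) ` A"
    by (simp add: inj_vimage_image_eq[OF inj_Qst] image_iff)
qed

lemma left_det_SD_initial_step:
  assumes n: "1 \<le> n"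
  shows "step_set (underlying (SD_n n)) {(S, {})} 1 \<in> left_det_SD n"
    and "Fst \<notin> fst ` step_set (underlying (SD_n n)) {(S, {})} 1"
    and "profile (step_set (underlying (SD_n n)) {(S, {})} 1) = perm_profile n id"
proof -
  have one: "1 \<in> {1..n}" using n by simp
  show "step_set (underlying (SD_n n)) {(S, {})} 1 \<in> left_det_SD n"
    using one by (intro subset_det.step subset_det.init) (simp add: Sigma_n_def)
  show "Fst \<notin> fst ` step_set (underlying (SD_n n)) {(S, {})} 1"
    using step_set_SD_n_initial[OF one] by auto
  show "profile (step_set (underlying (SD_n n)) {(S, {})} 1) = perm_profile n id"
    using step_set_SD_n_initial[OF one] profile_image[of id "\<lambda>i. {1..<i}" "{1..n}"]
    by (simp add: perm_profile_def)
qed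

lemma ex_left_det_SD_perm_profile:
  assumes n: "1 \<le> n" and \<pi>: "\<pi> permutes {1..n}"
  shows "\<exists>P\<in>left_det_SD n. S \<notin> fst ` P \<and> profile P = perm_profile n \<pi>"
proof -
  have "1 \<in> {1..n}" using n by simp
  with \<pi> finite_atLeastAtMost show ?thesis
  proof (induction rule: permutes_star_transpositions_induct)
    case id
    then show ?case using left_det_SD_initial_step[OF n] S_notin_fst_step_set_SD_n by blast
  next
    case (step \<pi> j)
    then obtain P where P: "P \<in> left_det_SD n" "S \<notin> fst ` P" "profile P = perm_profile n \<pi>" by blast
    have j: "j \<in> {1..n}" by fact
    let ?P' = "step_set (underlying (SD_n n)) P j"
    have "?P' \<in> left_det_SD n" using P(1) j by (intro subset_det.step) (simp_all add: Sigma_n_def)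
    moreover have "profile ?P' = perm_profile n (tau j \<circ> \<pi>)"
      using profile_step_set_SD_n[OF left_det_SD_subset_SD_states[OF P(1)] P(2) j] P(3)
      by (simp add: perm_profile_comp)
    ultimately show ?case using S_notin_fst_step_set_SD_n by blast
  qed
qed

lemma ex_left_det_SD_perm_profile_Fst:
  assumes n: "1 \<le> n" and \<pi>: "\<pi> permutes {1..n}"
  shows "\<exists>P\<in>left_det_SD n. Fst \<in> fst ` P \<and> profile P = perm_profile n \<pi>"
proof -
  obtain P where P: "P \<in> left_det_SD n" "S \<notin> fst ` P" "profile P = perm_profile n \<pi>"
    using ex_left_det_SD_perm_profile[OF assms] by blast
  have one: "1 \<in> {1..n}" using n by simp
  let ?P' = "step_set (underlying (SD_n n)) P 1"
  have "?P' \<in> left_det_SD n" using P(1) one by (intro subset_det.step) (simp_all add: Sigma_n_def)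
  moreover have "profile ?P' = profile P"
    using profile_step_set_SD_n[OF left_det_SD_subset_SD_states[OF P(1)] P(2) one] by simp
  moreover have "Fst \<in> fst ` ?P'"
  proof -
    \<comment> \<open>the state recording \<open>\<pi> 1\<close> has no \<open>q\<^sub>i\<close> in its second component, so \<open>a\<^sub>1\<close> leads it to \<open>f\<close>\<close>
    have "(\<pi> 1, {}) \<in> profile P" using P(3) n by (force simp: perm_profile_def)
    then obtain N where N: "(Qst (\<pi> 1), N) \<in> P" "Qst -` N = {}" by (auto simp: profile_def)
    then have sd: "(Qst (\<pi> 1), N) \<in> SD_states n" using left_det_SD_subset_SD_states[OF P(1)] by blast
    then have "1 \<le> \<pi> 1" using SD_states_Delta_nD(3) by fastforce
    moreover have "Fst \<notin> step_set (U_n n) N 1" using N(2) by (auto simp: Fst_in_step_set_U_n)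
    ultimately have "((Qst (\<pi> 1), N), 1, (Fst, insert (Qst (\<pi> 1)) (step_set (U_n n) N 1)))
        \<in> underlying (SD_n n)"
      using one underlying_SD_n_from_Qst[OF sd, of 1] by simp
    then show ?thesis using N(1) by (force simp: step_set_def)
  qed
  ultimately show ?thesis using P(3) by auto
qed

lemma left_det_SD_signatures:
  assumes n: "1 \<le> n"
  shows "insert (False, {}) (insert (False, perm_profile n id) (Pair True ` perm_profile n ` {\<pi>. \<pi> permutes {1..n}}))
    \<subseteq> (\<lambda>P. (Fst \<in> fst ` P, profile P)) ` left_det_SD n"
proof -
  have "(False, {}) = (Fst \<in> fst ` {(S, {})}, profile {(S, {})})" by (simp add: profile_def)
  with subset_det.init have "(False, {}) \<in> (\<lambda>P. (Fst \<in> fst ` P, profile P)) ` left_det_SD n"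
    by (rule rev_image_eqI)
  moreover have "(False, perm_profile n id) \<in> (\<lambda>P. (Fst \<in> fst ` P, profile P)) ` left_det_SD n"
    by (rule rev_image_eqI[OF left_det_SD_initial_step(1)[OF n]]) (use left_det_SD_initial_step(2,3)[OF n] in simp)
  moreover have "(True, perm_profile n \<pi>) \<in> (\<lambda>P. (Fst \<in> fst ` P, profile P)) ` left_det_SD n"
    if \<pi>: "\<pi> permutes {1..n}" for \<pi>
  proof -
    obtain P where "P \<in> left_det_SD n" "Fst \<in> fst ` P" "profile P = perm_profile n \<pi>"
      using ex_left_det_SD_perm_profile_Fst[OF n \<pi>] by blast
    then show ?thesis by (intro rev_image_eqI[of P]) auto
  qed
  ultimately show ?thesis by blast
qed

lemma card_left_det_SD_ge:
  assumes n: "1 \<le> n"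
  shows "fact n + 2 \<le> card (left_det_SD n)"
proof -
  let ?profiles = "perm_profile n ` {\<pi>. \<pi> permutes {1..n}}"
  have "card (Pair True ` ?profiles) = card ?profiles" by (rule card_image) (simp add: inj_on_def)
  also have "\<dots> = fact n"
    using card_image[OF inj_on_perm_profile] card_permutations[of "{1..n}" n] by simp
  finally have "card (Pair True ` ?profiles) = fact n" .
  moreover have "finite (Pair True ` ?profiles)" using finite_permutations[of "{1..n}"] by simp
  moreover have "(False, perm_profile n id) \<notin> Pair True ` ?profiles" by blast
  moreover have "perm_profile n id \<noteq> {}" using n by (simp add: perm_profile_def)
  then have "(False, {}) \<notin> insert (False, perm_profile n id) (Pair True ` ?profiles)" by blast
  ultimately have "fact n + 2 = card (insert (False, {}) (insert (False, perm_profile n id) (Pair True ` ?profiles)))"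
    by simp
  also have "\<dots> \<le> card ((\<lambda>P. (Fst \<in> fst ` P, profile P)) ` left_det_SD n)"
    by (rule card_mono[OF finite_imageI[OF finite_left_det_SD] left_det_SD_signatures[OF n]])
  also have "\<dots> \<le> card (left_det_SD n)" using finite_left_det_SD by (rule card_image_le)
  finally show ?thesis .
qed

section \<open>The right subset construction\<close>

abbreviation right_det_SD :: "nat \<Rightarrow> (st \<times> st set) set set" where
  "right_det_SD n \<equiv> subset_det (Sigma_n n) (reverse_aut (underlying (SD_n n))) (sd_final (Delta_n n) S {Fst})"

lemma finite_right_det_SD: "finite (right_det_SD n)"
proof (rule finite_subset_det, rule finite_subset[OF _ finite_SD_states])
  show "{q. \<exists>p a. (p, a, q) \<in> reverse_aut (underlying (SD_n n))} \<subseteq> SD_states n"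
    by (auto simp: reverse_aut_def dest: underlying_sd_trans_states)
qed

lemma SD_n_from_Qst_empty:
  assumes "(Qst k, {}) \<in> SD_states n" "j \<in> {1..n}"
  shows "((Qst k, {}), j, (Qst (tau j k), {})) \<in> underlying (SD_n n)"
    and "j \<le> k \<Longrightarrow> ((Qst k, {}), j, (Fst, {Qst (tau j k)})) \<in> underlying (SD_n n)"
  using assms(2) underlying_SD_n_from_Qst[OF assms(1), of j] by (simp_all add: step_set_def)

lemma Qst_empty_in_SD_states:
  assumes "k \<in> {1..n}"
  shows "(Qst k, {}) \<in> SD_states n"
proof -
  have "1 \<in> {1..n}" using assms by simp
  then have t: "((S, {}), k, (Qst 1, {})) \<in> underlying (SD_n n)"
    using assms underlying_SD_n_from_S[of "{}" k _ n] by force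
  then have "(Qst 1, {}) \<in> SD_states n" using underlying_sd_trans_states[OF t] by blast
  from underlying_sd_trans_states[OF SD_n_from_Qst_empty(1)[OF this assms]] show ?thesis
    by simp
qed

lemma fst_sd_final_Delta_n:
  assumes n: "1 \<le> n"
  shows "fst ` sd_final (Delta_n n) S {Fst} = {Fst}"
proof -
  have n_range: "n \<in> {1..n}" "1 \<in> {1..n}" using n by auto
  have t: "((Qst n, {}), 1, (Fst, {Qst (tau 1 n)})) \<in> underlying (SD_n n)"
    using SD_n_from_Qst_empty(2)[OF Qst_empty_in_SD_states[OF n_range(1)] n_range(2)] n by simp
  then have "(Fst, {Qst (tau 1 n)}) \<in> sd_final (Delta_n n) S {Fst}"
    using underlying_sd_trans_states[OF t] by (simp add: sd_final_singleton)
  then show ?thesis by (force simp: sd_final_singleton)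
qed

lemma right_det_SD_segment:
  assumes j: "j \<in> {1..n}"
  shows "\<exists>P\<in>right_det_SD n. fst ` P = Qst ` {j..n} \<and> (\<forall>k\<in>{j..n}. (Qst k, {}) \<in> P)"
proof -
  let ?P = "step_set (reverse_aut (underlying (SD_n n))) (sd_final (Delta_n n) S {Fst}) j"
  have "?P \<in> right_det_SD n" using j by (intro subset_det.step subset_det.init) (simp add: Sigma_n_def)
  moreover have Z: "(Qst k, {}) \<in> ?P" if "k \<in> {j..n}" for k
  proof -
    have k: "k \<in> {1..n}" using that j by simp
    have t: "((Qst k, {}), j, (Fst, {Qst (tau j k)})) \<in> underlying (SD_n n)"
      using SD_n_from_Qst_empty(2)[OF Qst_empty_in_SD_states[OF k] j] that by simp
    then have "(Fst, {Qst (tau j k)}) \<in> sd_final (Delta_n n) S {Fst}"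
      using underlying_sd_trans_states[OF t] by (simp add: sd_final_singleton)
    with t show ?thesis by (auto simp: mem_step_set_reverse_aut)
  qed
  moreover have "fst ` ?P \<subseteq> Qst ` {j..n}"
  proof -
    have "fst ` ?P \<subseteq> step_set (reverse_aut (U_n n)) (fst ` sd_final (Delta_n n) S {Fst}) j"
      by (rule fst_step_set_reverse_sd_trans)
    also have "\<dots> = step_set (reverse_aut (U_n n)) {Fst} j"
      using j fst_sd_final_Delta_n[of n] by simp
    finally show ?thesis using step_set_reverse_U_n_Fst[OF j] by simp
  qed
  moreover have "Qst ` {j..n} \<subseteq> fst ` ?P" using Z by force
  ultimately show ?thesis by blast
qed

lemma right_det_SD_step_Qst_empty:
  assumes "P \<in> right_det_SD n" "j \<in> {1..n}" "k \<in> {1..n}" "(Qst (tau j k), {}) \<in> P"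
  shows "(Qst k, {}) \<in> step_set (reverse_aut (underlying (SD_n n))) P j"
  using SD_n_from_Qst_empty(1)[OF Qst_empty_in_SD_states[OF assms(3)] assms(2)] assms(4)
  by (auto simp: mem_step_set_reverse_aut)

lemma fst_step_set_right_det_SD:
  assumes "fst ` P \<subseteq> insert S (Qst ` Y)" "j \<in> {1..n}" "Y \<subseteq> {1..n}" "Y \<noteq> {}"
  shows "fst ` step_set (reverse_aut (underlying (SD_n n))) P j \<subseteq> insert S (Qst ` tau j ` Y)"
proof -
  have "fst ` step_set (reverse_aut (underlying (SD_n n))) P j \<subseteq> step_set (reverse_aut (U_n n)) (fst ` P) j"
    by (rule fst_step_set_reverse_sd_trans)
  also have "\<dots> \<subseteq> step_set (reverse_aut (U_n n)) (insert S (Qst ` Y)) j"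
    by (rule step_set_mono[OF assms(1)])
  also have "\<dots> = insert S (Qst ` tau j ` Y)"
    using step_set_reverse_U_n_insert_S step_set_reverse_U_n_Qst[OF assms(2-4)] by simp
  finally show ?thesis .
qed

lemma right_det_SD_covers:
  assumes X: "X \<subseteq> {1..n}" "X \<noteq> {}"
  shows "\<exists>P\<in>right_det_SD n. fst ` P \<subseteq> insert S (Qst ` X) \<and> (\<forall>k\<in>X. (Qst k, {}) \<in> P)"
  using X
proof (induction rule: nonempty_subset_atLeastAtMost_induct)
  case (segment j)
  then obtain P where "P \<in> right_det_SD n" "fst ` P = Qst ` {j..n}" "\<forall>k\<in>{j..n}. (Qst k, {}) \<in> P"
    using right_det_SD_segment by blast
  then show ?case by (intro bexI[of _ P]) auto
next
  case (step Y j)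
  then obtain P where P: "P \<in> right_det_SD n" "fst ` P \<subseteq> insert S (Qst ` Y)" "\<forall>k\<in>Y. (Qst k, {}) \<in> P"
    by blast
  let ?P' = "step_set (reverse_aut (underlying (SD_n n))) P j"
  have "?P' \<in> right_det_SD n" using P(1) step(4) by (intro subset_det.step) (simp_all add: Sigma_n_def)
  moreover have "fst ` ?P' \<subseteq> insert S (Qst ` tau j ` Y)"
    using fst_step_set_right_det_SD[OF P(2) step(4,2,3)] .
  moreover have "\<forall>k\<in>tau j ` Y. (Qst k, {}) \<in> ?P'"
  proof
    fix k assume k: "k \<in> tau j ` Y"
    show "(Qst k, {}) \<in> ?P'"
    proof (rule right_det_SD_step_Qst_empty[OF P(1) step(4)])
      show "k \<in> {1..n}" using k step(2,4) tau_in_atLeastAtMost[of j n] by blast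
      show "(Qst (tau j k), {}) \<in> P" using k P(3) by (simp add: in_transpose_image_iff)
    qed
  qed
  ultimately show ?case by (intro bexI[of _ ?P']) simp_all
qed

lemma right_det_SD_insert_S:
  assumes X: "X \<subseteq> {1..n}" "X \<noteq> {}"
  shows "\<exists>P\<in>right_det_SD n. fst ` P = insert S (Qst ` X)"
proof -
  obtain l where l: "l \<in> X" using X by blast
  then have l_range: "l \<in> {1..n}" using X by blast
  let ?Y = "tau l ` X"
  have Y: "?Y \<subseteq> {1..n}" "?Y \<noteq> {}" "tau l ` ?Y = X"
    using X l_range tau_in_atLeastAtMost[of l n] by (auto simp: image_comp)
  have "1 \<in> ?Y" using l by (rule rev_image_eqI) simp
  obtain P where P: "P \<in> right_det_SD n" "fst ` P \<subseteq> insert S (Qst ` ?Y)" "\<forall>k\<in>?Y. (Qst k, {}) \<in> P"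
    using right_det_SD_covers[OF Y(1,2)] by blast
  let ?P' = "step_set (reverse_aut (underlying (SD_n n))) P l"
  have "?P' \<in> right_det_SD n" using P(1) l_range by (intro subset_det.step) (simp_all add: Sigma_n_def)
  moreover have "fst ` ?P' \<subseteq> insert S (Qst ` X)"
    using fst_step_set_right_det_SD[OF P(2) l_range Y(1,2)] Y(3) by simp
  moreover have "Qst ` X \<subseteq> fst ` ?P'"
  proof
    fix q assume "q \<in> Qst ` X"
    then obtain k where k: "k \<in> X" "q = Qst k" by blast
    have "(Qst (tau l k), {}) \<in> P" using P(3) k(1) by blast
    then have "(Qst k, {}) \<in> ?P'"
      using right_det_SD_step_Qst_empty[OF P(1) l_range] k(1) X(1) by blast
    then show "q \<in> fst ` ?P'" using k(2) by (metis fst_conv image_eqI)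
  qed
  moreover have "S \<in> fst ` ?P'"
  proof -
    have "((S, {}), l, (Qst 1, {})) \<in> underlying (SD_n n)"
      using l_range underlying_SD_n_from_S[of "{}" l _ n] by force
    moreover have "(Qst 1, {}) \<in> P" using P(3) \<open>1 \<in> ?Y\<close> by blast
    ultimately have "(S, {}) \<in> ?P'" unfolding mem_step_set_reverse_aut by blast
    then show ?thesis by (metis fst_conv image_eqI)
  qed
  ultimately show ?thesis by blast
qed

lemma card_right_det_SD_ge:
  assumes n: "1 \<le> n"
  shows "2 ^ n + n \<le> card (right_det_SD n)"
proof -
  have "reverse_subsets n \<subseteq> (\<lambda>P. fst ` P) ` right_det_SD n"
  proof
    fix B assume "B \<in> reverse_subsets n"
    then show "B \<in> (\<lambda>P. fst ` P) ` right_det_SD n"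
    proof (cases rule: reverse_subsetsE)
      case 1
      then have "B = fst ` sd_final (Delta_n n) S {Fst}" using fst_sd_final_Delta_n[OF n] by simp
      with subset_det.init show ?thesis by (rule rev_image_eqI)
    next
      case (2 j)
      then obtain P where "P \<in> right_det_SD n" "fst ` P = Qst ` {j..n}" using right_det_SD_segment by blast
      then show ?thesis using 2(2) by (intro rev_image_eqI[of P]) simp_all
    next
      case (3 X)
      then obtain P where "P \<in> right_det_SD n" "fst ` P = insert S (Qst ` X)" using right_det_SD_insert_S by blast
      then show ?thesis using 3(3) by (intro rev_image_eqI[of P]) simp_all
    qed
  qed
  then have "card (reverse_subsets n) \<le> card ((\<lambda>P. fst ` P) ` right_det_SD n)"
    by (rule card_mono[OF finite_imageI[OF finite_right_det_SD]])
  also have "\<dots> \<le> card (right_det_SD n)" using finite_right_det_SD by (rule card_image_le)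
  finally show ?thesis using card_reverse_subsets[OF n] by simp
qed

theorem theorem5:
  fixes n :: nat
  assumes "n \<ge> 1"
  shows "card (subset_det (Sigma_n n) (underlying (Tp_trans n)) (Tp_init n))
           + card (subset_det (Sigma_n n) (reverse_aut (underlying (Tp_trans n))) (Tp_final n))
           \<ge> (fact n + 2) + (2 ^ n + n)
       \<and> card (subset_det (Sigma_n n) (underlying (Delta_n n)) {S})
           + card (subset_det (Sigma_n n) (reverse_aut (underlying (Delta_n n))) {Fst})
           = 3 + (2 ^ n + n)"
proof
  show "card (subset_det (Sigma_n n) (underlying (Tp_trans n)) (Tp_init n))
          + card (subset_det (Sigma_n n) (reverse_aut (underlying (Tp_trans n))) (Tp_final n))
        \<ge> (fact n + 2) + (2 ^ n + n)"
    unfolding Tp_trans_eq[OF assms] Tp_init_eq[OF assms] Tp_final_eq[OF assms]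
    using card_left_det_SD_ge[OF assms] card_right_det_SD_ge[OF assms] by linarith
  show "card (subset_det (Sigma_n n) (underlying (Delta_n n)) {S})
          + card (subset_det (Sigma_n n) (reverse_aut (underlying (Delta_n n))) {Fst})
        = 3 + (2 ^ n + n)"
    using card_subset_det_U_n[OF assms] card_reverse_subsets[OF assms]
    by (simp add: subset_det_reverse_U_n)
qed

end
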